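(* Let $n\ge1$, let $(D_1,\dots,D_n)$ be jointly normal, each with mean $\mu$ and standard deviation $\sigma>0$, with common pairwise correlation $\rho$, $-\tfrac1{n-1}<\rho\le1$ (any $\rho$ if $n=1$), and let $L_n=\sqrt{n/(1+(n-1)\rho)}$. Let $r>c>\nu$, $0<t<r-\nu$, $g=r-c$, $\tilde g=c-\nu$, $p=r-\nu-t$, $R=(r-c)/(r-\nu)$, $\gamma=t/(r-\nu)$, $\tilde\gamma=1-\gamma=p/(r-\nu)$. For a common order quantity $X\in\mathbb{R}$ put $H_i=\max(X-D_i,0)$, $E_i=\max(D_i-X,0)$ and $$J_n(X)=\mathsf{E}\Big[\sum_{i=1}^n\big(r\min(X,D_i)+\nu H_i-cX\big)+p\min\Big(\sum_{i=1}^nH_i,\sum_{i=1}^nE_i\Big)\Big].$$ Let $Y_n$ be the unique real solution of $R=\gamma\Phi(Y_n)+\tilde\gamma\Phi(L_nY_n)$. Then $\max_{X\in\mathbb{R}}J_n(X)$ is attained at $X=\mu+\sigma Y_n$ and $$\dot J_n:=\max_{X}J_n(X)=n(g+\tilde g)\Big(R\mu-\sigma\big[\gamma\,\phi(Y_n)+\tilde\gamma\,\phi(L_nY_n)/L_n\big]\Big).$$ Consequently the equal allocation $\beta_n=\dot J_n/n$ of the grand coalition equals $(g+\tilde g)\big(R\mu-\sigma[\gamma\phi(Y_n)+\tilde\gamma\phi(L_nY_n)/L_n]\big)$.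
   Context: $\phi$ and $\Phi$ denote the standard normal pdf and cdf. $J_n(X)$ is the expected total profit of a coalition of $n$ identical newsvendors (selling price $r$, unit cost $c$, salvage value $\nu$) who all order $X$ and optimally transship surplus units among themselves at unit transportation cost $t$, each transshipped unit yielding profit $p$. *)

theory Defs
  imports "HOL-Probability.Probability"
begin

definition std_phi :: "real \<Rightarrow> real" where
  "std_phi x = std_normal_density x"

definition std_Phi :: "real \<Rightarrow> real" where
  "std_Phi y = (LBINT x:{..y}. std_normal_density x)"

text \<open>Jointly normal random vector (D_0, ..., D_(n-1)) on M with mean vector mu and
covariance matrix C: every linear combination is normal with the corresponding mean and
variance (a degenerate normal, i.e. a.s. constant, when the variance is 0).\<close>
definition jointly_normal ::
  "'a measure \<Rightarrow> nat \<Rightarrow> (nat \<Rightarrow> 'a \<Rightarrow> real) \<Rightarrow> (nat \<Rightarrow> real) \<Rightarrow> (nat \<Rightarrow> nat \<Rightarrow> real) \<Rightarrow> bool" where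
  "jointly_normal M n D mu C \<longleftrightarrow>
     (\<forall>i<n. D i \<in> borel_measurable M) \<and>
     (\<forall>a :: nat \<Rightarrow> real.
        let m = (\<Sum>i<n. a i * mu i);
            v = (\<Sum>i<n. \<Sum>j<n. a i * a j * C i j)
        in (if v > 0
            then distributed M lborel (\<lambda>\<omega>. \<Sum>i<n. a i * D i \<omega>)
                   (\<lambda>x. ennreal (normal_density m (sqrt v) x))
            else (AE \<omega> in M. (\<Sum>i<n. a i * D i \<omega>) = m)))"

definition J_coal ::
  "'a measure \<Rightarrow> nat \<Rightarrow> (nat \<Rightarrow> 'a \<Rightarrow> real) \<Rightarrow> real \<Rightarrow> real \<Rightarrow> real \<Rightarrow> real \<Rightarrow> real \<Rightarrow> real" where
  "J_coal M n D r c \<nu> t X =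
     (let p = r - \<nu> - t in
      integral\<^sup>L M (\<lambda>\<omega>.
        (\<Sum>i<n. r * min X (D i \<omega>) + \<nu> * max (X - D i \<omega>) 0 - c * X)
        + p * min (\<Sum>i<n. max (X - D i \<omega>) 0) (\<Sum>i<n. max (D i \<omega> - X) 0)))"

end

theory Submission
  imports Defs
begin

text \<open>Pooling the leftovers makes the realized coalition profit equal to
  \<open>n g X - t \<Sum>H\<^sub>i - p (n X - \<Sum>D\<^sub>i)\<^sup>+\<close>, so \<open>J\<^sub>n\<close> depends only on the marginals
  \<open>D\<^sub>i ~ N(\<mu>, \<sigma>)\<close> and \<open>\<Sum>D\<^sub>i ~ N(n\<mu>, n\<sigma>/L\<^sub>n)\<close>. Writing \<open>K y = E (y - Z)\<^sup>+ = y \<Phi> y + \<phi> y\<close>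
  for a standard normal \<open>Z\<close>, this gives
  \<open>J\<^sub>n (\<mu> + \<sigma> Z) = n g \<mu> + n \<sigma> (g Z - t K Z - p K (L\<^sub>n Z) / L\<^sub>n)\<close>.
  Since \<open>K\<close> is convex with subgradient \<open>\<Phi>\<close>, this is concave in \<open>Z\<close> and maximal where
  \<open>g = t \<Phi> Z + p \<Phi> (L\<^sub>n Z)\<close>, which after division by \<open>r - \<nu>\<close> is the equation for \<open>Y\<^sub>n\<close>;
  its right-hand side increases strictly from \<open>0\<close> to \<open>r - \<nu>\<close>. At the optimum the terms
  \<open>Y \<Phi>\<close> in \<open>K\<close> cancel against \<open>g Y\<close>, leaving only the densities.\<close>

lemma integrable_indicator_times:
  fixes f :: "real \<Rightarrow> real"
  assumes "A \<in> sets borel" and "integrable lborel f"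
  shows "integrable lborel (\<lambda>x. indicator A x * f x)"
  using integrable_real_mult_indicator[OF _ assms(2), of A] assms(1) by (simp add: mult.commute)

lemma integral_indicator_lessThan_eq_atMost:
  fixes f :: "real \<Rightarrow> real"
  assumes [measurable]: "f \<in> borel_measurable borel"
  shows "(\<integral>x. indicator {..<y} x * f x \<partial>lborel) = (\<integral>x. indicator {..y} x * f x \<partial>lborel)"
  by (rule integral_cong_AE)
    (auto intro!: eventually_mono[OF AE_lborel_singleton[of y]] split: split_indicator)

lemma std_Phi_eq_integral: "std_Phi y = (\<integral>x. indicator {..y} x * std_normal_density x \<partial>lborel)"
  unfolding std_Phi_def set_lebesgue_integral_def by simp

lemma std_Phi_uminus: "std_Phi y = 1 - std_Phi (- y)"
proof -
  have "std_Phi y = (LBINT x : {x. - x \<in> {..y}}. std_normal_density (- x))"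
    unfolding std_Phi_def by (rule set_integral_reflect)
  also have "\<dots> = (\<integral>x. std_normal_density x - indicator {..< -y} x * std_normal_density x \<partial>lborel)"
    unfolding set_lebesgue_integral_def
    by (intro Bochner_Integration.integral_cong) (auto simp: std_normal_density_def split: split_indicator)
  also have "\<dots> = 1 - (\<integral>x. indicator {..< -y} x * std_normal_density x \<partial>lborel)"
    by (subst Bochner_Integration.integral_diff) (auto intro!: integrable_indicator_times)
  also have "\<dots> = 1 - std_Phi (-y)"
    by (simp add: integral_indicator_lessThan_eq_atMost std_Phi_eq_integral)
  finally show ?thesis .
qed

lemma std_Phi_at_top: "(std_Phi \<longlongrightarrow> 1) at_top"
  using tendsto_integral_at_top[of lborel std_normal_density]
  by (simp add: std_Phi_eq_integral[abs_def])

lemma std_Phi_at_bot: "(std_Phi \<longlongrightarrow> 0) at_bot"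
proof -
  have "((\<lambda>y. 1 - std_Phi (-y)) \<longlongrightarrow> 1 - 1) at_bot"
    by (intro tendsto_intros filterlim_compose[OF std_Phi_at_top filterlim_uminus_at_top_at_bot])
  then show ?thesis by (simp flip: std_Phi_uminus)
qed

lemma std_Phi_diff:
  "a \<le> b \<Longrightarrow> std_Phi b - std_Phi a = (\<integral>x. indicator {a<..b} x * std_normal_density x \<partial>lborel)"
  unfolding std_Phi_eq_integral
  by (subst Bochner_Integration.integral_diff[symmetric])
    (auto intro!: integrable_indicator_times Bochner_Integration.integral_cong split: split_indicator)

lemma std_normal_density_le_1: "std_normal_density x \<le> 1"
proof -
  have "1 \<le> sqrt (2 * pi)" using pi_gt3 by simp
  then have "1 / sqrt (2 * pi) \<le> 1" by simp
  moreover have "exp (- x\<^sup>2 / 2) \<le> 1" by simp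
  ultimately show ?thesis
    unfolding std_normal_density_def by (intro mult_le_one) auto
qed

lemma std_Phi_diff_le: "a \<le> b \<Longrightarrow> std_Phi b - std_Phi a \<le> b - a"
proof -
  assume "a \<le> b"
  have "(\<integral>x. indicator {a<..b} x * std_normal_density x \<partial>lborel) \<le> (\<integral>x. indicator {a<..b} x \<partial>lborel)"
    by (intro integral_mono integrable_indicator_times)
      (use \<open>a \<le> b\<close> in \<open>auto simp: std_normal_density_le_1 integrable_indicator_iff split: split_indicator\<close>)
  then show ?thesis using \<open>a \<le> b\<close> by (simp add: std_Phi_diff)
qed

lemma strict_mono_std_Phi: "strict_mono std_Phi"
proof (rule strict_monoI)
  fix a b :: real assume "a < b"
  define m where "m = std_normal_density (\<bar>a\<bar> + \<bar>b\<bar>)"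
  have "m > 0" unfolding m_def by (simp add: normal_density_pos)
  have m_le: "m \<le> std_normal_density x" if "a < x" "x \<le> b" for x
  proof -
    have "x\<^sup>2 \<le> (\<bar>a\<bar> + \<bar>b\<bar>)\<^sup>2" using that by (intro abs_le_square_iff[THEN iffD1]) linarith
    then show ?thesis unfolding m_def std_normal_density_def by (auto intro!: divide_right_mono)
  qed
  have "(b - a) * m = (\<integral>x. indicator {a<..b} x * m \<partial>lborel)"
    using \<open>a < b\<close> by simp
  also have "\<dots> \<le> (\<integral>x. indicator {a<..b} x * std_normal_density x \<partial>lborel)"
    using \<open>a < b\<close>
    by (intro integral_mono integrable_indicator_times integrable_mult_left)
      (auto simp: m_le integrable_indicator_iff split: split_indicator)
  also have "\<dots> = std_Phi b - std_Phi a" using \<open>a < b\<close> by (simp add: std_Phi_diff)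
  finally show "std_Phi a < std_Phi b"
    using \<open>a < b\<close> \<open>m > 0\<close> by (smt (verit) mult_pos_pos)
qed

lemma continuous_on_std_Phi: "continuous_on S std_Phi"
proof (rule lipschitz_on_continuous_on)
  show "1-lipschitz_on S std_Phi"
  proof (rule lipschitz_onI)
    fix x y :: real
    show "dist (std_Phi x) (std_Phi y) \<le> 1 * dist x y"
      using std_Phi_diff_le[of x y] std_Phi_diff_le[of y x]
        strict_mono_less_eq[OF strict_mono_std_Phi, of x y]
        strict_mono_less_eq[OF strict_mono_std_Phi, of y x]
      by (cases "x \<le> y") (auto simp: dist_real_def)
  qed simp
qed

lemma std_normal_density_at_top: "(std_normal_density \<longlongrightarrow> 0) at_top"
proof -
  have "LIM x at_top. x\<^sup>2 * (1 / 2 :: real) :> at_top"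
    by (rule filterlim_at_top_mult_tendsto_pos[OF tendsto_const])
      (auto intro!: filterlim_pow_at_top filterlim_ident)
  then have "LIM x at_top. - (x\<^sup>2 * (1 / 2 :: real)) :> at_bot"
    by (rule filterlim_compose[OF filterlim_uminus_at_bot_at_top])
  then have "((\<lambda>x. 1 / sqrt (2 * pi) * exp (- (x\<^sup>2 * (1 / 2)))) \<longlongrightarrow> 1 / sqrt (2 * pi) * 0) at_top"
    by (intro tendsto_intros filterlim_compose[OF exp_at_bot])
  then show ?thesis by (simp add: std_normal_density_def[abs_def])
qed

lemma integral_upper_tail_times_std_normal_density:
  "(\<integral>x. indicator {y..} x * (x * std_normal_density x) \<partial>lborel) = std_normal_density y"
proof -
  let ?f = "\<lambda>x. indicator {y..} x * (x * std_normal_density x)"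
  have int: "integrable lborel (\<lambda>x. x * std_normal_density x)"
    using integrable_std_normal_moment[of 1] by (simp add: mult.commute)
  have "((\<lambda>b. \<integral>x. indicator {..b} x *\<^sub>R ?f x \<partial>lborel) \<longlongrightarrow> \<integral>x. ?f x \<partial>lborel) at_top"
    by (rule tendsto_integral_at_top) (auto intro!: integrable_indicator_times int)
  moreover have "\<forall>\<^sub>F b in at_top.
      (\<integral>x. indicator {..b} x *\<^sub>R ?f x \<partial>lborel) = std_normal_density y - std_normal_density b"
  proof (rule eventually_at_top_linorder[THEN iffD2], intro exI allI impI)
    fix b assume "y \<le> b"
    have "((\<lambda>x. - (C * exp (- x\<^sup>2 / 2))) has_real_derivative (x * (C * exp (- x\<^sup>2 / 2)))) (at x)"
      for C x :: real
      by (auto intro!: derivative_eq_intros simp: power2_eq_square algebra_simps)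
    then have "((\<lambda>x. - std_normal_density x) has_real_derivative (x * std_normal_density x)) (at x)" for x
      unfolding std_normal_density_def .
    then have "((\<lambda>x. - std_normal_density x) has_vector_derivative (x * std_normal_density x))
        (at x within {y..b})" for x
      by (simp add: has_real_derivative_iff_has_vector_derivative has_vector_derivative_at_within)
    moreover have "continuous_on {y..b} (\<lambda>x. x * std_normal_density x)"
      unfolding std_normal_density_def by (intro continuous_intros) auto
    ultimately have "(\<integral>x. indicator {y..b} x *\<^sub>R (x * std_normal_density x) \<partial>lborel)
        = - std_normal_density b - - std_normal_density y"
      by (intro integral_FTC_atLeastAtMost \<open>y \<le> b\<close>)
    then show "(\<integral>x. indicator {..b} x *\<^sub>R ?f x \<partial>lborel) = std_normal_density y - std_normal_density b"
      by (simp add: atLeastAtMost_def indicator_inter_arith mult_ac)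
  qed
  ultimately have "((\<lambda>b. std_normal_density y - std_normal_density b) \<longlongrightarrow> \<integral>x. ?f x \<partial>lborel) at_top"
    using tendsto_cong by fastforce
  moreover have "((\<lambda>b. std_normal_density y - std_normal_density b) \<longlongrightarrow> std_normal_density y - 0) at_top"
    by (intro tendsto_intros std_normal_density_at_top)
  ultimately show ?thesis using tendsto_unique[OF trivial_limit_at_top_linorder] by fastforce
qed

definition std_normal_overage :: "real \<Rightarrow> real" where
  "std_normal_overage y = (\<integral>z. std_normal_density z * max (y - z) 0 \<partial>lborel)"

lemma integrable_std_normal_overage:
  "integrable lborel (\<lambda>z. std_normal_density z * max (y - z) 0)"
proof (rule Bochner_Integration.integrable_bound)
  show "integrable lborel (\<lambda>z. \<bar>y\<bar> * std_normal_density z + std_normal_density z * \<bar>z\<bar> ^ 1)"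
    by (intro Bochner_Integration.integrable_add integrable_mult_right integrable_std_normal_moment_abs) auto
  show "AE z in lborel. norm (std_normal_density z * max (y - z) 0)
      \<le> norm (\<bar>y\<bar> * std_normal_density z + std_normal_density z * \<bar>z\<bar> ^ 1)"
  proof (rule AE_I2)
    fix z
    have "std_normal_density z * max (y - z) 0 \<le> std_normal_density z * (\<bar>y\<bar> + \<bar>z\<bar>)"
      by (intro mult_left_mono) auto
    then show "norm (std_normal_density z * max (y - z) 0)
        \<le> norm (\<bar>y\<bar> * std_normal_density z + std_normal_density z * \<bar>z\<bar> ^ 1)"
      by (simp add: algebra_simps)
  qed
qed simp

lemma std_normal_overage_eq: "std_normal_overage y = y * std_Phi y + std_normal_density y"
proof -
  have int: "integrable lborel (\<lambda>x. x * std_normal_density x)"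
    using integrable_std_normal_moment[of 1] by (simp add: mult.commute)
  have "std_normal_overage y = (\<integral>z. y * (indicator {..y} z * std_normal_density z)
      - indicator {..y} z * (z * std_normal_density z) \<partial>lborel)"
    unfolding std_normal_overage_def
    by (intro Bochner_Integration.integral_cong) (auto split: split_indicator simp: algebra_simps)
  also have "\<dots> = y * std_Phi y - (\<integral>z. indicator {..<y} z * (z * std_normal_density z) \<partial>lborel)"
    by (subst Bochner_Integration.integral_diff)
      (auto intro!: integrable_indicator_times int simp: std_Phi_eq_integral integral_indicator_lessThan_eq_atMost)
  also have "(\<integral>z. indicator {..<y} z * (z * std_normal_density z) \<partial>lborel)
      = (\<integral>z. z * std_normal_density z - indicator {y..} z * (z * std_normal_density z) \<partial>lborel)"
    by (intro Bochner_Integration.integral_cong) (auto split: split_indicator)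
  also have "\<dots> = - std_normal_density y"
    using integral_std_normal_moment_odd[of 0]
    by (subst Bochner_Integration.integral_diff)
      (auto intro!: integrable_indicator_times int simp: integral_upper_tail_times_std_normal_density mult.commute)
  finally show ?thesis by simp
qed

lemma std_normal_overage_subgradient:
  "std_normal_overage y\<^sub>0 + (y - y\<^sub>0) * std_Phi y\<^sub>0 \<le> std_normal_overage y"
proof -
  have "std_normal_overage y\<^sub>0 + (y - y\<^sub>0) * std_Phi y\<^sub>0 = (\<integral>z. std_normal_density z * max (y\<^sub>0 - z) 0
      + (y - y\<^sub>0) * (indicator {..y\<^sub>0} z * std_normal_density z) \<partial>lborel)"
    unfolding std_normal_overage_def std_Phi_eq_integral
    by (subst Bochner_Integration.integral_add)
      (auto intro!: integrable_indicator_times integrable_std_normal_overage)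
  also have "\<dots> \<le> std_normal_overage y"
    unfolding std_normal_overage_def
  proof (rule integral_mono)
    fix z
    have "max (y\<^sub>0 - z) 0 + (y - y\<^sub>0) * indicator {..y\<^sub>0} z \<le> max (y - z) 0"
      by (auto split: split_indicator)
    then have "std_normal_density z * (max (y\<^sub>0 - z) 0 + (y - y\<^sub>0) * indicator {..y\<^sub>0} z)
        \<le> std_normal_density z * max (y - z) 0"
      by (rule mult_left_mono) simp
    then show "std_normal_density z * max (y\<^sub>0 - z) 0 + (y - y\<^sub>0) * (indicator {..y\<^sub>0} z * std_normal_density z)
        \<le> std_normal_density z * max (y - z) 0"
      by (simp add: algebra_simps)
  qed (auto intro!: Bochner_Integration.integrable_add integrable_mult_right
      integrable_indicator_times integrable_std_normal_overage)
  finally show ?thesis .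
qed

lemma
  fixes D :: "'a \<Rightarrow> real"
  assumes "prob_space M" and "s > 0"
    and "distributed M lborel D (\<lambda>x. ennreal (normal_density m s x))"
  shows integrable_pos_part_normal: "integrable M (\<lambda>\<omega>. max (x - D \<omega>) 0)"
    and integral_pos_part_normal:
      "(\<integral>\<omega>. max (x - D \<omega>) 0 \<partial>M) = s * std_normal_overage ((x - m) / s)"
proof -
  interpret prob_space M by fact
  have Z: "distributed M lborel (\<lambda>\<omega>. (D \<omega> - m) / s) (\<lambda>x. ennreal (std_normal_density x))"
    using assms(3) normal_standard_normal_convert[OF \<open>s > 0\<close>] by simp
  define y where "y = (x - m) / s"
  have scale: "max (x - D \<omega>) 0 = s * max (y - (D \<omega> - m) / s) 0" for \<omega>
    using \<open>s > 0\<close> unfolding y_def by (auto simp: max_def field_simps)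
  have "integrable lborel (\<lambda>z. std_normal_density z * (s * max (y - z) 0))"
    using integrable_std_normal_overage[of y] by (simp add: mult.left_commute)
  then show "integrable M (\<lambda>\<omega>. max (x - D \<omega>) 0)"
    using distributed_integrable[OF Z, of "\<lambda>z. s * max (y - z) 0"] by (simp add: scale)
  show "(\<integral>\<omega>. max (x - D \<omega>) 0 \<partial>M) = s * std_normal_overage ((x - m) / s)"
    using distributed_integral[OF Z, of "\<lambda>z. s * max (y - z) 0", symmetric]
    by (simp add: scale std_normal_overage_def mult.left_commute y_def)
qed

lemma ex1_eq_of_strict_mono_continuous:
  fixes f :: "real \<Rightarrow> real"
  assumes "continuous_on UNIV f" and "strict_mono f"
    and "(f \<longlongrightarrow> a) at_bot" and "(f \<longlongrightarrow> b) at_top" and "a < y" and "y < b"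
  shows "\<exists>!x. f x = y"
proof (rule ex_ex1I)
  obtain x\<^sub>0 where "\<And>x. x \<le> x\<^sub>0 \<Longrightarrow> f x < y"
    using order_tendstoD(2)[OF assms(3,5)] by (auto simp: eventually_at_bot_linorder)
  moreover obtain x\<^sub>1 where "\<And>x. x \<ge> x\<^sub>1 \<Longrightarrow> f x > y"
    using order_tendstoD(1)[OF assms(4,6)] by (auto simp: eventually_at_top_linorder)
  ultimately have "f x\<^sub>0 \<le> y" "y \<le> f (max x\<^sub>0 x\<^sub>1)" by (auto intro!: less_imp_le)
  then show "\<exists>x. f x = y"
    using IVT'[of f x\<^sub>0 y "max x\<^sub>0 x\<^sub>1"] continuous_on_subset[OF assms(1)] by auto
next
  show "f x = y \<Longrightarrow> f x' = y \<Longrightarrow> x = x'" for x x'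
    using strict_mono_eq[OF assms(2), of x x'] by simp
qed

lemma ex1_std_Phi_mixture_eq:
  assumes "0 \<le> \<gamma>" and "\<gamma> \<le> 1" and "L > 0" and "0 < R" and "R < 1"
  shows "\<exists>!Y. R = \<gamma> * std_Phi Y + (1 - \<gamma>) * std_Phi (L * Y)"
proof -
  let ?f = "\<lambda>Y. \<gamma> * std_Phi Y + (1 - \<gamma>) * std_Phi (L * Y)"
  have "strict_mono ?f"
  proof (rule strict_monoI)
    fix Y Y' :: real assume "Y < Y'"
    then have "std_Phi Y < std_Phi Y'" "std_Phi (L * Y) < std_Phi (L * Y')"
      using \<open>L > 0\<close> by (auto intro!: strict_monoD[OF strict_mono_std_Phi])
    then have "0 < \<gamma> * (std_Phi Y' - std_Phi Y) + (1 - \<gamma>) * (std_Phi (L * Y') - std_Phi (L * Y))"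
      using assms(1,2) by (cases "\<gamma> = 0") (auto intro!: add_pos_nonneg)
    then show "?f Y < ?f Y'" by (simp add: algebra_simps)
  qed
  moreover have "continuous_on UNIV ?f"
    by (intro continuous_intros continuous_on_compose2[OF continuous_on_std_Phi[of UNIV]]) auto
  moreover have "(?f \<longlongrightarrow> \<gamma> * 0 + (1 - \<gamma>) * 0) at_bot"
    using \<open>L > 0\<close> by (intro tendsto_intros std_Phi_at_bot filterlim_compose[OF std_Phi_at_bot]
        filterlim_tendsto_pos_mult_at_bot[OF tendsto_const] filterlim_ident)
  moreover have "(?f \<longlongrightarrow> \<gamma> * 1 + (1 - \<gamma>) * 1) at_top"
    using \<open>L > 0\<close> by (intro tendsto_intros std_Phi_at_top filterlim_compose[OF std_Phi_at_top]
        filterlim_tendsto_pos_mult_at_top[OF tendsto_const] filterlim_ident)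
  ultimately have "\<exists>!Y. ?f Y = R"
    using \<open>0 < R\<close> \<open>R < 1\<close> by (intro ex1_eq_of_strict_mono_continuous) auto
  then show ?thesis by (metis (no_types, lifting))
qed

lemma std_normal_overage_mixture_le:
  assumes "0 \<le> a" and "0 \<le> b" and "L > 0"
    and "A = a * std_Phi Y + b * std_Phi (L * Y)"
  shows "A * Z - a * std_normal_overage Z - b * std_normal_overage (L * Z) / L
       \<le> A * Y - a * std_normal_overage Y - b * std_normal_overage (L * Y) / L"
proof -
  have "a * (std_normal_overage Y + (Z - Y) * std_Phi Y) \<le> a * std_normal_overage Z"
    using \<open>0 \<le> a\<close> by (intro mult_left_mono std_normal_overage_subgradient)
  then have a: "a * std_normal_overage Y + a * (Z - Y) * std_Phi Y \<le> a * std_normal_overage Z"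
    by (simp add: algebra_simps)
  have "(std_normal_overage (L * Y) + L * (Z - Y) * std_Phi (L * Y)) / L \<le> std_normal_overage (L * Z) / L"
    using std_normal_overage_subgradient[of "L * Y" "L * Z"] \<open>L > 0\<close>
    by (intro divide_right_mono) (auto simp: algebra_simps)
  then have "std_normal_overage (L * Y) / L + (Z - Y) * std_Phi (L * Y) \<le> std_normal_overage (L * Z) / L"
    using \<open>L > 0\<close> by (simp add: add_divide_distrib)
  then have b: "b * std_normal_overage (L * Y) / L + b * (Z - Y) * std_Phi (L * Y) \<le> b * std_normal_overage (L * Z) / L"
    using mult_left_mono[OF _ \<open>0 \<le> b\<close>] by (fastforce simp: algebra_simps)
  have "A * Z - A * Y = a * (Z - Y) * std_Phi Y + b * (Z - Y) * std_Phi (L * Y)"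
    unfolding \<open>A = _\<close> by (simp add: algebra_simps)
  with a b show ?thesis by linarith
qed

lemma std_normal_overage_mixture_at_root:
  assumes "L \<noteq> 0" and "A = a * std_Phi Y + b * std_Phi (L * Y)"
  shows "A * Y - a * std_normal_overage Y - b * std_normal_overage (L * Y) / L
       = - (a * std_normal_density Y + b * std_normal_density (L * Y) / L)"
  using assms by (simp add: std_normal_overage_eq field_simps)

lemma coalition_profit_eq:
  fixes d :: "nat \<Rightarrow> real"
  shows "(\<Sum>i<n. r * min X (d i) + \<nu> * max (X - d i) 0 - c * X)
       + (r - \<nu> - t) * min (\<Sum>i<n. max (X - d i) 0) (\<Sum>i<n. max (d i - X) 0)
     = real n * (r - c) * X - t * (\<Sum>i<n. max (X - d i) 0)
       - (r - \<nu> - t) * max (real n * X - (\<Sum>i<n. d i)) 0"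
proof -
  define H where "H = (\<Sum>i<n. max (X - d i) 0)"
  have "(\<Sum>i<n. max (d i - X) 0) = (\<Sum>i<n. max (X - d i) 0 - (X - d i))"
    by (intro sum.cong) auto
  then have E: "(\<Sum>i<n. max (d i - X) 0) = H - (real n * X - (\<Sum>i<n. d i))"
    by (simp add: H_def sum_subtractf)
  have "(\<Sum>i<n. r * min X (d i) + \<nu> * max (X - d i) 0 - c * X)
      = (\<Sum>i<n. (r - c) * X - (r - \<nu>) * max (X - d i) 0)"
    by (intro sum.cong) (auto simp: min_def max_def algebra_simps)
  then have sales: "(\<Sum>i<n. r * min X (d i) + \<nu> * max (X - d i) 0 - c * X) = real n * (r - c) * X - (r - \<nu>) * H"
    by (simp add: H_def sum_subtractf sum_distrib_left)
  have transshipped: "min H (H - (real n * X - (\<Sum>i<n. d i)))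
      = H - max (real n * X - (\<Sum>i<n. d i)) 0"
    by (auto simp: min_def max_def)
  show ?thesis unfolding H_def[symmetric] E sales transshipped by (simp add: algebra_simps)
qed

lemma J_coal_eq_overage:
  assumes "prob_space M" and "\<sigma> > 0" and "s > 0"
    and "\<And>i. i < n \<Longrightarrow> distributed M lborel (D i) (\<lambda>x. ennreal (normal_density \<mu> \<sigma> x))"
    and "distributed M lborel (\<lambda>\<omega>. \<Sum>i<n. D i \<omega>) (\<lambda>x. ennreal (normal_density (real n * \<mu>) s x))"
  shows "J_coal M n D r c \<nu> t X = real n * (r - c) * X
      - t * (real n * (\<sigma> * std_normal_overage ((X - \<mu>) / \<sigma>)))
      - (r - \<nu> - t) * (s * std_normal_overage ((real n * X - real n * \<mu>) / s))"
proof -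
  interpret prob_space M by fact
  note leftover = integrable_pos_part_normal[OF \<open>prob_space M\<close> \<open>\<sigma> > 0\<close> assms(4)]
    integral_pos_part_normal[OF \<open>prob_space M\<close> \<open>\<sigma> > 0\<close> assms(4)]
  note pooled_leftover = integrable_pos_part_normal[OF \<open>prob_space M\<close> \<open>s > 0\<close> assms(5)]
    integral_pos_part_normal[OF \<open>prob_space M\<close> \<open>s > 0\<close> assms(5)]
  have "J_coal M n D r c \<nu> t X = (\<integral>\<omega>. real n * (r - c) * X - t * (\<Sum>i<n. max (X - D i \<omega>) 0)
      - (r - \<nu> - t) * max (real n * X - (\<Sum>i<n. D i \<omega>)) 0 \<partial>M)"
    unfolding J_coal_def Let_def by (simp add: coalition_profit_eq)
  also have "\<dots> = real n * (r - c) * X - t * (\<Sum>i<n. \<integral>\<omega>. max (X - D i \<omega>) 0 \<partial>M)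
      - (r - \<nu> - t) * (\<integral>\<omega>. max (real n * X - (\<Sum>i<n. D i \<omega>)) 0 \<partial>M)"
    using leftover(1) pooled_leftover(1) Bochner_Integration.integrable_sum[of "{..<n}" M "\<lambda>i \<omega>. max (X - D i \<omega>) 0"]
    by (simp add: Bochner_Integration.integral_diff Bochner_Integration.integral_sum prob_space)
  finally show ?thesis using leftover pooled_leftover by simp
qed

lemma jointly_normal_distributed_combination:
  assumes "jointly_normal M n D mu C"
    and "(\<Sum>i<n. \<Sum>j<n. a i * a j * C i j) = v" and "v > 0"
  shows "distributed M lborel (\<lambda>\<omega>. \<Sum>i<n. a i * D i \<omega>)
           (\<lambda>x. ennreal (normal_density (\<Sum>i<n. a i * mu i) (sqrt v) x))"
  using assms unfolding jointly_normal_def Let_def by auto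

lemma equicorrelated_normal_marginal:
  assumes "jointly_normal M n D (\<lambda>i. \<mu>) (\<lambda>i j. if i = j then \<sigma>\<^sup>2 else \<rho> * \<sigma>\<^sup>2)"
    and "\<sigma> > 0" and "i < n"
  shows "distributed M lborel (D i) (\<lambda>x. ennreal (normal_density \<mu> \<sigma> x))"
  using jointly_normal_distributed_combination[OF assms(1), of "\<lambda>j. of_bool (j = i)" "\<sigma>\<^sup>2"] assms(2,3)
  by (simp add: mult.assoc flip: sum_distrib_left)

lemma equicorrelated_normal_sum:
  assumes "jointly_normal M n D (\<lambda>i. \<mu>) (\<lambda>i j. if i = j then \<sigma>\<^sup>2 else \<rho> * \<sigma>\<^sup>2)"
    and "\<sigma> > 0" and "n \<ge> 1" and "1 + (real n - 1) * \<rho> > 0"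
  shows "distributed M lborel (\<lambda>\<omega>. \<Sum>i<n. D i \<omega>)
    (\<lambda>x. ennreal (normal_density (real n * \<mu>) (\<sigma> * sqrt (real n * (1 + (real n - 1) * \<rho>))) x))"
proof -
  have "(\<Sum>k<n. if j = k then \<sigma>\<^sup>2 else \<rho> * \<sigma>\<^sup>2) = \<sigma>\<^sup>2 * (1 + (real n - 1) * \<rho>)" if "j < n" for j
  proof -
    have "(\<Sum>k<n. if j = k then \<sigma>\<^sup>2 else \<rho> * \<sigma>\<^sup>2) = (\<Sum>k<n. \<rho> * \<sigma>\<^sup>2 + (if j = k then \<sigma>\<^sup>2 - \<rho> * \<sigma>\<^sup>2 else 0))"
      by (intro sum.cong) auto
    then show ?thesis using that by (simp add: sum.distrib algebra_simps)
  qed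
  then have "(\<Sum>i<n. \<Sum>j<n. 1 * 1 * (if i = j then \<sigma>\<^sup>2 else \<rho> * \<sigma>\<^sup>2))
      = (\<sigma> * sqrt (real n * (1 + (real n - 1) * \<rho>)))\<^sup>2"
    using assms(4) by (simp add: power_mult_distrib)
  moreover have "0 < (\<sigma> * sqrt (real n * (1 + (real n - 1) * \<rho>)))\<^sup>2"
    using assms(2-4) by simp
  ultimately show ?thesis
    using jointly_normal_distributed_combination[OF assms(1), of "\<lambda>_. 1"] assms(2,4) by simp
qed

lemma equicorrelation_pos:
  assumes "n \<ge> 1" and "n = 1 \<or> (- 1 / (real n - 1) < \<rho> \<and> \<rho> \<le> 1)"
  shows "1 + (real n - 1) * \<rho> > 0"
proof (cases "n = 1")
  case False
  then have "real n - 1 > 0" using assms(1) by simp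
  moreover have "- 1 / (real n - 1) < \<rho>" using assms(2) False by simp
  ultimately have "- 1 / (real n - 1) * (real n - 1) < \<rho> * (real n - 1)"
    by (intro mult_strict_right_mono)
  then show ?thesis using \<open>real n - 1 > 0\<close> by (simp add: algebra_simps)
qed simp

lemma J_coal_equicorrelated_normal:
  assumes "prob_space M" and "n \<ge> 1" and "\<sigma> > 0" and "1 + (real n - 1) * \<rho> > 0"
    and "jointly_normal M n D (\<lambda>i. \<mu>) (\<lambda>i j. if i = j then \<sigma>\<^sup>2 else \<rho> * \<sigma>\<^sup>2)"
    and "L = sqrt (real n / (1 + (real n - 1) * \<rho>))"
  shows "J_coal M n D r c \<nu> t (\<mu> + \<sigma> * Z) = real n * (r - c) * \<mu> + real n * \<sigma> *
      ((r - c) * Z - t * std_normal_overage Z - (r - \<nu> - t) * std_normal_overage (L * Z) / L)"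
proof -
  define s where "s = \<sigma> * sqrt (real n * (1 + (real n - 1) * \<rho>))"
  have "s > 0" "L > 0" using assms(2-4,6) by (simp_all add: s_def)
  have "L * s = \<sigma> * sqrt (real n / (1 + (real n - 1) * \<rho>) * (real n * (1 + (real n - 1) * \<rho>)))"
    unfolding assms(6) s_def by (simp flip: real_sqrt_mult)
  also have "\<dots> = real n * \<sigma>" using assms(4) by simp
  finally have s: "s = real n * \<sigma> / L" using \<open>L > 0\<close> by (simp add: field_simps)
  have "(real n * (\<mu> + \<sigma> * Z) - real n * \<mu>) / s = L * Z"
    using \<open>L > 0\<close> assms(2,3) unfolding s by (simp add: field_simps)
  moreover have "(\<mu> + \<sigma> * Z - \<mu>) / \<sigma> = Z" using assms(3) by simp
  ultimately show ?thesis
    using J_coal_eq_overage[OF assms(1,3) \<open>s > 0\<close> equicorrelated_normal_marginal[OF assms(5,3)]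
        equicorrelated_normal_sum[OF assms(5,3,2,4), folded s_def], of r c \<nu> t "\<mu> + \<sigma> * Z"]
    unfolding s by (simp add: algebra_simps)
qed

lemma
  assumes "prob_space M" and "n \<ge> 1" and "\<sigma> > 0" and "1 + (real n - 1) * \<rho> > 0"
    and "jointly_normal M n D (\<lambda>i. \<mu>) (\<lambda>i j. if i = j then \<sigma>\<^sup>2 else \<rho> * \<sigma>\<^sup>2)"
    and "L = sqrt (real n / (1 + (real n - 1) * \<rho>))"
    and "0 \<le> t" and "t \<le> r - \<nu>"
    and critical: "r - c = t * std_Phi Y + (r - \<nu> - t) * std_Phi (L * Y)"
  shows J_coal_le_at_critical_point: "J_coal M n D r c \<nu> t X \<le> J_coal M n D r c \<nu> t (\<mu> + \<sigma> * Y)"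
    and J_coal_at_critical_point: "J_coal M n D r c \<nu> t (\<mu> + \<sigma> * Y)
      = real n * (r - c) * \<mu> - real n * \<sigma> * (t * std_phi Y + (r - \<nu> - t) * std_phi (L * Y) / L)"
proof -
  have "L > 0" using assms(2,4,6) by simp
  note J = J_coal_equicorrelated_normal[OF assms(1-6), of r c \<nu> t]
  have "J_coal M n D r c \<nu> t X = J_coal M n D r c \<nu> t (\<mu> + \<sigma> * ((X - \<mu>) / \<sigma>))"
    using assms(3) by simp
  also have "\<dots> \<le> J_coal M n D r c \<nu> t (\<mu> + \<sigma> * Y)"
    unfolding J using std_normal_overage_mixture_le[OF _ _ \<open>L > 0\<close> critical, of "(X - \<mu>) / \<sigma>"] assms(3,7,8)
    by (intro add_left_mono mult_left_mono) auto
  finally show "J_coal M n D r c \<nu> t X \<le> J_coal M n D r c \<nu> t (\<mu> + \<sigma> * Y)" .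
  have "L \<noteq> 0" using \<open>L > 0\<close> by simp
  show "J_coal M n D r c \<nu> t (\<mu> + \<sigma> * Y)
      = real n * (r - c) * \<mu> - real n * \<sigma> * (t * std_phi Y + (r - \<nu> - t) * std_phi (L * Y) / L)"
    unfolding J std_normal_overage_mixture_at_root[OF \<open>L \<noteq> 0\<close> critical] std_phi_def
    by (simp add: algebra_simps)
qed

theorem mainTheorem7:
  fixes M :: "'a measure" and n :: nat and D :: "nat \<Rightarrow> 'a \<Rightarrow> real"
    and \<mu> \<sigma> \<rho> r c \<nu> t :: real
  assumes "prob_space M"
    and "n \<ge> 1"
    and "\<sigma> > 0"
    and "n = 1 \<or> (- 1 / (real n - 1) < \<rho> \<and> \<rho> \<le> 1)"
    and "jointly_normal M n D (\<lambda>i. \<mu>) (\<lambda>i j. if i = j then \<sigma>^2 else \<rho> * \<sigma>^2)"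
    and "r > c" and "c > \<nu>" and "0 < t" and "t < r - \<nu>"
  shows
    "let L = sqrt (real n / (1 + (real n - 1) * \<rho>));
         g = r - c; g' = c - \<nu>; R = (r - c) / (r - \<nu>);
         \<gamma> = t / (r - \<nu>); \<gamma>' = 1 - \<gamma>;
         J = J_coal M n D r c \<nu> t
     in (\<exists>!Y. R = \<gamma> * std_Phi Y + \<gamma>' * std_Phi (L * Y)) \<and>
        (\<forall>Y. R = \<gamma> * std_Phi Y + \<gamma>' * std_Phi (L * Y) \<longrightarrow>
           (\<forall>X. J X \<le> J (\<mu> + \<sigma> * Y)) \<and>
           J (\<mu> + \<sigma> * Y) = real n * (g + g') *
              (R * \<mu> - \<sigma> * (\<gamma> * std_phi Y + \<gamma>' * std_phi (L * Y) / L)) \<and>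
           J (\<mu> + \<sigma> * Y) / real n = (g + g') *
              (R * \<mu> - \<sigma> * (\<gamma> * std_phi Y + \<gamma>' * std_phi (L * Y) / L)))"
proof -
  define L where "L = sqrt (real n / (1 + (real n - 1) * \<rho>))"
  have q: "1 + (real n - 1) * \<rho> > 0" using assms(2,4) by (rule equicorrelation_pos)
  then have "L > 0" using assms(2) by (simp add: L_def)
  have "r - \<nu> > 0" using assms(6,7) by simp
  then have scale: "(r - \<nu>) * ((r - c) / (r - \<nu>)) = r - c" "(r - \<nu>) * (t / (r - \<nu>)) = t"
    by simp_all
  have critical: "r - c = t * std_Phi Y + (r - \<nu> - t) * std_Phi (L * Y)"
    if "(r - c) / (r - \<nu>) = t / (r - \<nu>) * std_Phi Y + (1 - t / (r - \<nu>)) * std_Phi (L * Y)" for Y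
  proof -
    have "r - c = (r - \<nu>) * ((r - c) / (r - \<nu>))" using scale(1) by simp
    also have "\<dots> = (r - \<nu>) * (t / (r - \<nu>)) * std_Phi Y
        + ((r - \<nu>) - (r - \<nu>) * (t / (r - \<nu>))) * std_Phi (L * Y)"
      unfolding that by (simp add: algebra_simps)
    finally show ?thesis unfolding scale .
  qed
  have optimal_value: "real n * (r - c) * \<mu> - real n * \<sigma> * (t * std_phi Y + (r - \<nu> - t) * std_phi (L * Y) / L)
      = real n * (r - c + (c - \<nu>)) * ((r - c) / (r - \<nu>) * \<mu>
        - \<sigma> * (t / (r - \<nu>) * std_phi Y + (1 - t / (r - \<nu>)) * std_phi (L * Y) / L))" for Y
  proof -
    have "real n * (r - c + (c - \<nu>)) * ((r - c) / (r - \<nu>) * \<mu>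
        - \<sigma> * (t / (r - \<nu>) * std_phi Y + (1 - t / (r - \<nu>)) * std_phi (L * Y) / L))
      = real n * ((r - \<nu>) * ((r - c) / (r - \<nu>)) * \<mu> - \<sigma> * ((r - \<nu>) * (t / (r - \<nu>)) * std_phi Y
        + ((r - \<nu>) - (r - \<nu>) * (t / (r - \<nu>))) * std_phi (L * Y) / L))"
      by (simp add: algebra_simps)
    then show ?thesis unfolding scale by (simp add: algebra_simps)
  qed
  note critical_point_facts = J_coal_le_at_critical_point J_coal_at_critical_point
  note optimum = critical_point_facts[OF assms(1-3) q assms(5) L_def less_imp_le[OF assms(8)]
      less_imp_le[OF assms(9)] critical]
  show ?thesis
    unfolding Let_def L_def[symmetric]
  proof (intro conjI allI impI)
    show "\<exists>!Y. (r - c) / (r - \<nu>) = t / (r - \<nu>) * std_Phi Y + (1 - t / (r - \<nu>)) * std_Phi (L * Y)"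
      using \<open>L > 0\<close> \<open>r - \<nu> > 0\<close> assms(6-9) by (intro ex1_std_Phi_mixture_eq) simp_all
  qed (use optimum optimal_value assms(2) in simp_all)
qed

end
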